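(* For every $\varepsilon>0$ there exists a unit-cost $k$-of-$n$ instance $I$ of Stochastic Score Classification (i.e., $B=2$, $c_j=1$ for all $j$, and $p_j\in(0,1)$ for all $j$) such that $$\mathbb{E}[\mathrm{cost}(\overline{\mathrm{OPT}},I)]\ge\left(\tfrac32-\varepsilon\right)\cdot\mathbb{E}[\mathrm{cost}(\mathrm{OPT},I)],$$ where $\overline{\mathrm{OPT}}$ is an optimal non-adaptive strategy and $\mathrm{OPT}$ an optimal adaptive strategy for $I$.
   Context: An instance $I$ of Stochastic Score Classification (SSC) consists of tests $N=\{1,\dots,n\}$, costs $c_j\ge 0$, success probabilities $p_j\in(0,1)$, and integers $0=t_1<t_2<\dots<t_B<t_{B+1}=n+1$. The outcome vector $x\in\{0,1\}^N$ has independent coordinates with $\Pr[x_j=1]=p_j$. The score $f(x)$ is the unique $i$ with $t_i\le\|x\|_1\le t_{i+1}-1$. A $k$-of-$n$ instance is one with $B=2$ and $t_2=k$. A (possibly adaptive) strategy conducts tests one at a time, each at most once, the choice of the next test possibly depending on outcomes observed so far, and stops as soon as $f(x)$ is determined (all $x'$ agreeing with $x$ on the conducted tests have $f(x')=f(x)$). A non-adaptive strategy is a fixed permutation of $N$: tests are conducted in this order until $f(x)$ is determined. $\mathrm{cost}(S,I)$ is the random total cost of tests conducted by $S$. $\mathrm{OPT}$ (resp. $\overline{\mathrm{OPT}}$) minimizes $\mathbb{E}[\mathrm{cost}(S,I)]$ over all adaptive (resp. non-adaptive) strategies. *)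

theory Defs
  imports Complex_Main
begin

text \<open>Tests are indexed by 0..<n (the paper's 1..n shifted).
  Thresholds: the list t = [t_1, ..., t_B] with t_1 = 0, strictly increasing, t_B <= n
  (t_{B+1} = n+1 is implicit).\<close>

definition outcomes :: "nat \<Rightarrow> (nat \<Rightarrow> bool) set" where
  "outcomes n = {x. \<forall>j. n \<le> j \<longrightarrow> \<not> x j}"

definition ones :: "nat \<Rightarrow> (nat \<Rightarrow> bool) \<Rightarrow> nat" where
  "ones n x = card {j \<in> {0..<n}. x j}"

definition valid_thresholds :: "nat list \<Rightarrow> nat \<Rightarrow> bool" where
  "valid_thresholds t n \<longleftrightarrow> t \<noteq> [] \<and> t ! 0 = 0 \<and> sorted_wrt (<) t \<and> last t \<le> n"

text \<open>Score: the unique i in 1..B with t_i <= |x| <= t_{i+1} - 1 (for valid thresholds this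
  is the number of thresholds that are <= |x|).\<close>
definition score :: "nat list \<Rightarrow> nat \<Rightarrow> (nat \<Rightarrow> bool) \<Rightarrow> nat" where
  "score t n x = card {i \<in> {1..length t}. t ! (i - 1) \<le> ones n x}"

definition prob :: "(nat \<Rightarrow> real) \<Rightarrow> nat \<Rightarrow> (nat \<Rightarrow> bool) \<Rightarrow> real" where
  "prob p n x = (\<Prod>j<n. if x j then p j else 1 - p j)"

text \<open>A history is a partial map from conducted tests to their observed outcomes.\<close>
definition consistent :: "(nat \<Rightarrow> bool option) \<Rightarrow> (nat \<Rightarrow> bool) \<Rightarrow> bool" where
  "consistent h x \<longleftrightarrow> (\<forall>j b. h j = Some b \<longrightarrow> x j = b)"

definition determined :: "nat list \<Rightarrow> nat \<Rightarrow> (nat \<Rightarrow> bool option) \<Rightarrow> bool" where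
  "determined t n h \<longleftrightarrow>
     (\<forall>x\<in>outcomes n. \<forall>y\<in>outcomes n. consistent h x \<and> consistent h y \<longrightarrow> score t n x = score t n y)"

definition restrict_hist :: "(nat \<Rightarrow> bool) \<Rightarrow> nat set \<Rightarrow> (nat \<Rightarrow> bool option)" where
  "restrict_hist x S = (\<lambda>j. if j \<in> S then Some (x j) else None)"

text \<open>Adaptive strategy: maps the history observed so far to the next test to conduct.
  Valid: whenever the score is not yet determined, the next test is a new test in N.\<close>
definition valid_adaptive :: "nat list \<Rightarrow> nat \<Rightarrow> ((nat \<Rightarrow> bool option) \<Rightarrow> nat) \<Rightarrow> bool" where
  "valid_adaptive t n \<sigma> \<longleftrightarrow>
     (\<forall>h. dom h \<subseteq> {0..<n} \<and> \<not> determined t n h \<longrightarrow> \<sigma> h < n \<and> \<sigma> h \<notin> dom h)"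

fun run :: "nat list \<Rightarrow> nat \<Rightarrow> ((nat \<Rightarrow> bool option) \<Rightarrow> nat) \<Rightarrow> (nat \<Rightarrow> bool)
             \<Rightarrow> nat \<Rightarrow> (nat \<Rightarrow> bool option) \<Rightarrow> (nat \<Rightarrow> bool option)" where
  "run t n \<sigma> x 0 h = h"
| "run t n \<sigma> x (Suc m) h =
     (if determined t n h then h else run t n \<sigma> x m (h(\<sigma> h \<mapsto> x (\<sigma> h))))"

definition adaptive_cost :: "(nat \<Rightarrow> real) \<Rightarrow> nat list \<Rightarrow> nat \<Rightarrow> ((nat \<Rightarrow> bool option) \<Rightarrow> nat)
                             \<Rightarrow> (nat \<Rightarrow> bool) \<Rightarrow> real" where
  "adaptive_cost c t n \<sigma> x = (\<Sum>j\<in>dom (run t n \<sigma> x n Map.empty). c j)"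

definition expected_adaptive :: "(nat \<Rightarrow> real) \<Rightarrow> (nat \<Rightarrow> real) \<Rightarrow> nat list \<Rightarrow> nat
                                 \<Rightarrow> ((nat \<Rightarrow> bool option) \<Rightarrow> nat) \<Rightarrow> real" where
  "expected_adaptive c p t n \<sigma> = (\<Sum>x\<in>outcomes n. prob p n x * adaptive_cost c t n \<sigma> x)"

text \<open>Non-adaptive strategy: a permutation of N (as a list); tests are conducted in this
  order until the score is determined.\<close>
definition valid_nonadaptive :: "nat \<Rightarrow> nat list \<Rightarrow> bool" where
  "valid_nonadaptive n \<pi> \<longleftrightarrow> distinct \<pi> \<and> set \<pi> = {0..<n}"

definition na_stop :: "nat list \<Rightarrow> nat \<Rightarrow> nat list \<Rightarrow> (nat \<Rightarrow> bool) \<Rightarrow> nat" where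
  "na_stop t n \<pi> x = (LEAST m. determined t n (restrict_hist x (set (take m \<pi>))))"

definition na_cost :: "(nat \<Rightarrow> real) \<Rightarrow> nat list \<Rightarrow> nat \<Rightarrow> nat list \<Rightarrow> (nat \<Rightarrow> bool) \<Rightarrow> real" where
  "na_cost c t n \<pi> x = (\<Sum>j\<in>set (take (na_stop t n \<pi> x) \<pi>). c j)"

definition expected_nonadaptive :: "(nat \<Rightarrow> real) \<Rightarrow> (nat \<Rightarrow> real) \<Rightarrow> nat list \<Rightarrow> nat
                                    \<Rightarrow> nat list \<Rightarrow> real" where
  "expected_nonadaptive c p t n \<pi> = (\<Sum>x\<in>outcomes n. prob p n x * na_cost c t n \<pi> x)"

definition OPT :: "(nat \<Rightarrow> real) \<Rightarrow> (nat \<Rightarrow> real) \<Rightarrow> nat list \<Rightarrow> nat \<Rightarrow> real" where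
  "OPT c p t n = Inf (expected_adaptive c p t n ` {\<sigma>. valid_adaptive t n \<sigma>})"

definition OPT_na :: "(nat \<Rightarrow> real) \<Rightarrow> (nat \<Rightarrow> real) \<Rightarrow> nat list \<Rightarrow> nat \<Rightarrow> real" where
  "OPT_na c p t n = Inf (expected_nonadaptive c p t n ` {\<pi>. valid_nonadaptive n \<pi>})"

end

theory Submission
  imports Defs
begin

text \<open>Take \<open>n = 2m + 1\<close> tests and threshold \<open>k = m + 1\<close>: test 0 is a fair coin, tests
  \<open>1..m\<close> succeed and tests \<open>m+1..2m\<close> fail with probability \<open>1 - \<delta>\<close>. Up to probability
  \<open>O(m\<delta>)\<close> the outcome is either the yes outcome (exactly \<open>0..m\<close> succeed, score 2) or the no
  outcome (exactly \<open>1..m\<close> succeed, score 1), each with probability \<open>(1 - \<delta>)^(2m)/2\<close>.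
  An adaptive strategy reads test 0 and then certifies the corresponding outcome with \<open>m + 1\<close>
  tests in total, so \<open>OPT \<approx> m + 1\<close>. A non-adaptive order must test all of \<open>{0..m}\<close> on the yes
  outcome and all of \<open>{0, m+1..2m}\<close> on the no outcome; these sets cover all tests, so on one of
  the two outcomes it pays \<open>2m + 1\<close>, and its expected cost is about \<open>(3m + 2)/2\<close>.
  Letting \<open>m \<rightarrow> \<infinity>\<close> and \<open>\<delta> \<rightarrow> 0\<close> gives the ratio \<open>3/2\<close>.\<close>

lemma outcomes_eq_image_Pow: "outcomes n = (\<lambda>S j. j \<in> S) ` Pow {0..<n}"
proof (rule set_eqI, rule iffI)
  fix x assume "x \<in> outcomes n"
  then have "x = (\<lambda>j. j \<in> {j. x j})" and "{j. x j} \<in> Pow {0..<n}"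
    by (auto simp: outcomes_def) (meson not_le)
  then show "x \<in> (\<lambda>S j. j \<in> S) ` Pow {0..<n}" by blast
qed (auto simp: outcomes_def)

lemma finite_outcomes: "finite (outcomes n)"
  by (simp add: outcomes_eq_image_Pow)

lemma fun_upd_in_outcomes: "x \<in> outcomes n \<Longrightarrow> j < n \<Longrightarrow> x(j := b) \<in> outcomes n"
  by (simp add: outcomes_def)

lemma prob_nonneg: "(\<And>j. j < n \<Longrightarrow> 0 \<le> p j \<and> p j \<le> 1) \<Longrightarrow> 0 \<le> prob p n x"
  unfolding prob_def by (rule prod_nonneg) auto

lemma sum_prob_outcomes:
  assumes "\<And>j. j < n \<Longrightarrow> 0 \<le> p j \<and> p j \<le> 1"
  shows "(\<Sum>x\<in>outcomes n. prob p n x) = 1"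
proof -
  have inj: "inj_on (\<lambda>S j. j \<in> S) (Pow {0..<n})"
    by (rule inj_onI) (auto dest: fun_cong)
  have "(\<Sum>x\<in>outcomes n. prob p n x) = (\<Sum>S\<in>Pow {0..<n}. prob p n (\<lambda>j. j \<in> S))"
    unfolding outcomes_eq_image_Pow by (simp add: sum.reindex[OF inj])
  also have "\<dots> = (\<Sum>S\<in>Pow {0..<n}. (\<Prod>j\<in>S. p j) * (\<Prod>j\<in>{0..<n}-S. 1 - p j))"
  proof (rule sum.cong[OF refl])
    fix S assume "S \<in> Pow {0..<n}"
    then have "{0..<n} \<inter> {j. j \<in> S} = S" "{0..<n} \<inter> - {j. j \<in> S} = {0..<n} - S" by auto
    then show "prob p n (\<lambda>j. j \<in> S) = (\<Prod>j\<in>S. p j) * (\<Prod>j\<in>{0..<n}-S. 1 - p j)"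
      unfolding prob_def lessThan_atLeast0 by (simp add: prod.If_cases)
  qed
  also have "\<dots> = (\<Prod>j\<in>{0..<n}. p j + (1 - p j))"
    by (rule prod_add[symmetric]) simp
  finally show ?thesis by simp
qed

lemma score_two_thresholds: "0 < k \<Longrightarrow> score [0, k] n x = (if k \<le> ones n x then 2 else 1)"
proof -
  assume "0 < k"
  then have "{i \<in> {1..length [0, k]}. [0, k] ! (i - 1) \<le> ones n x} = (if k \<le> ones n x then {1, 2} else {1})"
    by (auto simp: le_Suc_eq)
  then show ?thesis by (simp add: score_def)
qed

lemma dom_restrict_hist [simp]: "dom (restrict_hist x S) = S"
  by (auto simp: restrict_hist_def dom_def)

lemma consistent_restrict_hist [simp]:
  "consistent (restrict_hist x S) y \<longleftrightarrow> (\<forall>j\<in>S. y j = x j)"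
  by (auto simp: consistent_def restrict_hist_def)

lemma restrict_hist_empty [simp]: "restrict_hist x {} = Map.empty"
  by (simp add: restrict_hist_def)

lemma determined_if_all_tested:
  assumes "{0..<n} \<subseteq> dom h"
  shows "determined t n h"
  unfolding determined_def
proof (intro ballI impI)
  fix x y assume xy: "x \<in> outcomes n" "y \<in> outcomes n" "consistent h x \<and> consistent h y"
  have "x = y"
  proof (rule ext)
    fix j show "x j = y j"
    proof (cases "j < n")
      case True
      then obtain b where "h j = Some b" using assms by auto
      then show ?thesis using xy by (simp add: consistent_def)
    qed (use xy in \<open>simp add: outcomes_def\<close>)
  qed
  then show "score t n x = score t n y" by simp
qed

lemma tested_if_flip_changes_score:
  assumes "determined t n (restrict_hist x C)" "x \<in> outcomes n" "j < n"
    and "score t n (x(j := b)) \<noteq> score t n x"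
  shows "j \<in> C"
proof (rule ccontr)
  assume "j \<notin> C"
  then have "consistent (restrict_hist x C) (x(j := b))" by simp
  moreover have "consistent (restrict_hist x C) x" by simp
  ultimately show False
    using assms(1,4) fun_upd_in_outcomes[OF assms(2,3)] assms(2) unfolding determined_def by blast
qed

lemma ones_consistent_bounds:
  assumes "C \<subseteq> {0..<n}" "y \<in> outcomes n" "consistent (restrict_hist x C) y"
  shows "card {j \<in> C. x j} \<le> ones n y"
    and "ones n y \<le> card {j \<in> C. x j} + card ({0..<n} - C)"
proof -
  have fin: "finite C" using assms(1) finite_subset by blast
  have lo: "{j \<in> C. x j} \<subseteq> {j \<in> {0..<n}. y j}" and
       hi: "{j \<in> {0..<n}. y j} \<subseteq> {j \<in> C. x j} \<union> ({0..<n} - C)"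
    using assms by auto
  show "card {j \<in> C. x j} \<le> ones n y"
    unfolding ones_def by (rule card_mono[OF _ lo]) simp
  have "ones n y \<le> card ({j \<in> C. x j} \<union> ({0..<n} - C))"
    unfolding ones_def by (rule card_mono[OF _ hi]) (simp add: fin)
  also have "\<dots> \<le> card {j \<in> C. x j} + card ({0..<n} - C)"
    by (rule card_Un_le)
  finally show "ones n y \<le> card {j \<in> C. x j} + card ({0..<n} - C)" .
qed

lemma determined_two_thresholds:
  assumes "0 < k" "C \<subseteq> {0..<n}"
    and "k \<le> card {j \<in> C. x j} \<or> card {j \<in> C. x j} + card ({0..<n} - C) < k"
  shows "determined [0, k] n (restrict_hist x C)"
  unfolding determined_def
proof (intro ballI impI)
  fix y z assume yz: "y \<in> outcomes n" "z \<in> outcomes n"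
    "consistent (restrict_hist x C) y \<and> consistent (restrict_hist x C) z"
  then have "card {j \<in> C. x j} \<le> ones n y" "ones n y \<le> card {j \<in> C. x j} + card ({0..<n} - C)"
    "card {j \<in> C. x j} \<le> ones n z" "ones n z \<le> card {j \<in> C. x j} + card ({0..<n} - C)"
    using ones_consistent_bounds[OF assms(2)] by blast+
  then have "(k \<le> ones n y) = (k \<le> ones n z)"
    using assms(3) by linarith
  then show "score [0, k] n y = score [0, k] n z"
    using assms(1) by (simp add: score_two_thresholds)
qed

lemma adaptive_cost_unit: "adaptive_cost (\<lambda>_. 1) t n \<sigma> x = card (dom (run t n \<sigma> x n Map.empty))"
  by (simp add: adaptive_cost_def)

lemma na_cost_unit: "na_cost (\<lambda>_. 1) t n \<pi> x = card (set (take (na_stop t n \<pi> x) \<pi>))"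
  by (simp add: na_cost_def)

lemma dom_run_subset:
  assumes "valid_adaptive t n \<sigma>" "dom h \<subseteq> {0..<n}"
  shows "dom (run t n \<sigma> x r h) \<subseteq> {0..<n}"
  using assms(2)
proof (induction r arbitrary: h)
  case (Suc r)
  show ?case
  proof (cases "determined t n h")
    case False
    then have "\<sigma> h < n" using assms(1) Suc.prems by (auto simp: valid_adaptive_def)
    then have "dom (h(\<sigma> h \<mapsto> x (\<sigma> h))) \<subseteq> {0..<n}" using Suc.prems by auto
    from Suc.IH[OF this] False show ?thesis by (simp add: fun_upd_def)
  qed (use Suc in simp)
qed simp

lemma adaptive_cost_unit_le:
  assumes "valid_adaptive t n \<sigma>"
  shows "adaptive_cost (\<lambda>_. 1) t n \<sigma> x \<le> n"
proof -
  have "dom (run t n \<sigma> x n Map.empty) \<subseteq> {0..<n}" by (rule dom_run_subset[OF assms]) simp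
  from card_mono[OF _ this] show ?thesis by (simp add: adaptive_cost_unit)
qed

lemma dom_run_subset_prefix:
  assumes follows: "\<forall>i<L. \<sigma> (restrict_hist x (set (take i \<pi>))) = \<pi> ! i"
    and det: "determined t n (restrict_hist x (set (take L \<pi>)))" and "L \<le> length \<pi>"
  shows "i \<le> L \<Longrightarrow> dom (run t n \<sigma> x r (restrict_hist x (set (take i \<pi>)))) \<subseteq> set (take L \<pi>)"
proof (induction r arbitrary: i)
  case 0 then show ?case by (simp add: set_take_subset_set_take)
next
  case (Suc r)
  show ?case
  proof (cases "determined t n (restrict_hist x (set (take i \<pi>)))")
    case True then show ?thesis using Suc.prems by (simp add: set_take_subset_set_take)
  next
    case False
    then have "i < L" using Suc.prems det by (cases "i = L") auto
    have "(restrict_hist x (set (take i \<pi>)))(\<pi> ! i \<mapsto> x (\<pi> ! i)) = restrict_hist x (set (take (Suc i) \<pi>))"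
      using \<open>i < L\<close> \<open>L \<le> length \<pi>\<close> by (auto simp: restrict_hist_def take_Suc_conv_app_nth fun_eq_iff)
    then show ?thesis using False follows Suc.IH[of "Suc i"] \<open>i < L\<close> by simp
  qed
qed

lemma adaptive_cost_unit_le_prefix:
  assumes "\<forall>i<L. \<sigma> (restrict_hist x (set (take i \<pi>))) = \<pi> ! i"
    and "determined t n (restrict_hist x (set (take L \<pi>)))" and "L \<le> length \<pi>"
  shows "adaptive_cost (\<lambda>_. 1) t n \<sigma> x \<le> L"
proof -
  have "dom (run t n \<sigma> x n Map.empty) \<subseteq> set (take L \<pi>)"
    using dom_run_subset_prefix[OF assms, of 0] by simp
  then have "card (dom (run t n \<sigma> x n Map.empty)) \<le> card (set (take L \<pi>))"
    by (rule card_mono[rotated]) simp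
  also have "\<dots> \<le> L" using card_length[of "take L \<pi>"] by simp
  finally show ?thesis by (simp add: adaptive_cost_unit)
qed

lemma expected_adaptive_unit_le:
  assumes "valid_adaptive t n \<sigma>" "\<And>j. j < n \<Longrightarrow> 0 \<le> p j \<and> p j \<le> 1"
    and "S \<subseteq> outcomes n" "\<And>x. x \<in> S \<Longrightarrow> adaptive_cost (\<lambda>_. 1) t n \<sigma> x \<le> L"
  shows "expected_adaptive (\<lambda>_. 1) p t n \<sigma>
           \<le> L * (\<Sum>x\<in>S. prob p n x) + n * (1 - (\<Sum>x\<in>S. prob p n x))"
proof -
  let ?f = "\<lambda>x. prob p n x * adaptive_cost (\<lambda>_. 1) t n \<sigma> x"
  have "(\<Sum>x\<in>S. ?f x) \<le> (\<Sum>x\<in>S. prob p n x * L)"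
    by (intro sum_mono mult_left_mono assms(4) prob_nonneg assms(2))
  moreover have "(\<Sum>x\<in>outcomes n - S. ?f x) \<le> (\<Sum>x\<in>outcomes n - S. prob p n x * n)"
    by (intro sum_mono mult_left_mono adaptive_cost_unit_le assms(1) prob_nonneg assms(2))
  moreover have "(\<Sum>x\<in>outcomes n - S. prob p n x) = 1 - (\<Sum>x\<in>S. prob p n x)"
    using sum_diff[OF finite_outcomes assms(3), of "prob p n"] sum_prob_outcomes[of n p, OF assms(2)]
    by linarith
  ultimately show ?thesis
    using sum.subset_diff[OF assms(3) finite_outcomes, of ?f]
    unfolding expected_adaptive_def sum_distrib_right[symmetric] by (simp add: algebra_simps)
qed

lemma na_stop_determined:
  assumes "valid_nonadaptive n \<pi>"
  shows "determined t n (restrict_hist x (set (take (na_stop t n \<pi> x) \<pi>)))"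
proof -
  have "determined t n (restrict_hist x (set (take (length \<pi>) \<pi>)))"
    using assms by (intro determined_if_all_tested) (simp add: valid_nonadaptive_def)
  then show ?thesis unfolding na_stop_def by (rule LeastI)
qed

text \<open>Both stopping sets are prefixes of the same order, so the later one contains the other.\<close>

lemma card_Un_le_max_na_cost:
  assumes "A \<subseteq> set (take (na_stop t n \<pi> x) \<pi>)" "B \<subseteq> set (take (na_stop t n \<pi> y) \<pi>)"
  shows "card (A \<union> B) \<le> max (na_cost (\<lambda>_. 1) t n \<pi> x) (na_cost (\<lambda>_. 1) t n \<pi> y)"
proof -
  let ?s = "max (na_stop t n \<pi> x) (na_stop t n \<pi> y)"
  have "A \<union> B \<subseteq> set (take ?s \<pi>)"
    using assms set_take_subset_set_take[of _ ?s \<pi>] by (meson Un_least max.cobounded1 max.cobounded2 subset_trans)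
  then have "card (A \<union> B) \<le> card (set (take ?s \<pi>))" by (rule card_mono[rotated]) simp
  also have "set (take ?s \<pi>) = set (take (na_stop t n \<pi> x) \<pi>) \<or> set (take ?s \<pi>) = set (take (na_stop t n \<pi> y) \<pi>)"
    by (simp add: max_def)
  ultimately show ?thesis unfolding na_cost_unit by auto
qed

lemma card_le_na_cost:
  "A \<subseteq> set (take (na_stop t n \<pi> x) \<pi>) \<Longrightarrow> card A \<le> na_cost (\<lambda>_. 1) t n \<pi> x"
  unfolding na_cost_unit by (simp add: card_mono)

lemma expected_nonadaptive_ge_sum:
  assumes "\<And>j. j < n \<Longrightarrow> 0 \<le> p j \<and> p j \<le> 1" "\<And>j. 0 \<le> c j" "S \<subseteq> outcomes n"
  shows "(\<Sum>x\<in>S. prob p n x * na_cost c t n \<pi> x) \<le> expected_nonadaptive c p t n \<pi>"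
  unfolding expected_nonadaptive_def
  using assms by (intro sum_mono2 finite_outcomes mult_nonneg_nonneg prob_nonneg)
    (auto simp: na_cost_def intro: sum_nonneg)

lemma expected_adaptive_nonneg:
  assumes "\<And>j. j < n \<Longrightarrow> 0 \<le> p j \<and> p j \<le> 1" "\<And>j. 0 \<le> c j"
  shows "0 \<le> expected_adaptive c p t n \<sigma>"
  unfolding expected_adaptive_def adaptive_cost_def
  using assms by (intro sum_nonneg mult_nonneg_nonneg prob_nonneg) auto

lemma OPT_le_expected_adaptive:
  assumes "valid_adaptive t n \<sigma>" "\<And>j. j < n \<Longrightarrow> 0 \<le> p j \<and> p j \<le> 1" "\<And>j. 0 \<le> c j"
  shows "OPT c p t n \<le> expected_adaptive c p t n \<sigma>"
  unfolding OPT_def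
proof (rule cInf_lower)
  show "bdd_below (expected_adaptive c p t n ` {\<sigma>. valid_adaptive t n \<sigma>})"
    using expected_adaptive_nonneg[of n p c, OF assms(2,3)] by (intro bdd_belowI2[where m = 0])
qed (use assms(1) in simp)

lemma OPT_nonneg:
  assumes "valid_adaptive t n \<sigma>" "\<And>j. j < n \<Longrightarrow> 0 \<le> p j \<and> p j \<le> 1" "\<And>j. 0 \<le> c j"
  shows "0 \<le> OPT c p t n"
  unfolding OPT_def using assms expected_adaptive_nonneg by (intro cInf_greatest) auto

lemma le_OPT_na:
  assumes "\<And>\<pi>. valid_nonadaptive n \<pi> \<Longrightarrow> b \<le> expected_nonadaptive c p t n \<pi>"
  shows "b \<le> OPT_na c p t n"
proof -
  have "valid_nonadaptive n [0..<n]" by (simp add: valid_nonadaptive_def)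
  then show ?thesis unfolding OPT_na_def using assms by (intro cInf_greatest) auto
qed

lemma ones_fun_upd:
  assumes "j < n" "x j \<noteq> b"
  shows "ones n (x(j := b)) = (if b then Suc (ones n x) else ones n x - 1)"
proof (cases b)
  case True
  then have "{i \<in> {0..<n}. (x(j := b)) i} = insert j {i \<in> {0..<n}. x i}" using assms by auto
  then show ?thesis using True assms by (simp add: ones_def)
next
  case False
  then have "{i \<in> {0..<n}. (x(j := b)) i} = {i \<in> {0..<n}. x i} - {j}" using assms by auto
  then show ?thesis using False assms by (simp add: ones_def)
qed

definition hard_probs :: "nat \<Rightarrow> real \<Rightarrow> nat \<Rightarrow> real" where
  "hard_probs m \<delta> j = (if j = 0 then 1/2 else if j \<le> m then 1 - \<delta> else \<delta>)"

definition yes_outcome :: "nat \<Rightarrow> nat \<Rightarrow> bool" where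
  "yes_outcome m j \<longleftrightarrow> j \<le> m"

definition no_outcome :: "nat \<Rightarrow> nat \<Rightarrow> bool" where
  "no_outcome m j \<longleftrightarrow> 1 \<le> j \<and> j \<le> m"

definition yes_order :: "nat \<Rightarrow> nat list" where
  "yes_order m = [0..<Suc (2*m)]"

definition no_order :: "nat \<Rightarrow> nat list" where
  "no_order m = 0 # [Suc m..<Suc (2*m)] @ [1..<Suc m]"

definition branching_strategy :: "nat \<Rightarrow> (nat \<Rightarrow> bool option) \<Rightarrow> nat" where
  "branching_strategy m h =
     hd (filter (\<lambda>j. j \<notin> dom h) (if h 0 = Some True then yes_order m else no_order m))"

lemma yes_outcome_in_outcomes: "yes_outcome m \<in> outcomes (Suc (2*m))"
  by (auto simp: yes_outcome_def outcomes_def)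

lemma no_outcome_in_outcomes: "no_outcome m \<in> outcomes (Suc (2*m))"
  by (auto simp: no_outcome_def outcomes_def)

lemma yes_outcome_ne_no_outcome: "yes_outcome m \<noteq> no_outcome m"
  by (auto simp: yes_outcome_def no_outcome_def fun_eq_iff)

lemma ones_yes_outcome: "ones (Suc (2*m)) (yes_outcome m) = Suc m"
proof -
  have "{j \<in> {0..<Suc (2*m)}. yes_outcome m j} = {0..<Suc m}" by (auto simp: yes_outcome_def)
  then show ?thesis by (simp add: ones_def)
qed

lemma ones_no_outcome: "ones (Suc (2*m)) (no_outcome m) = m"
proof -
  have "{j \<in> {0..<Suc (2*m)}. no_outcome m j} = {1..<Suc m}" by (auto simp: no_outcome_def)
  then show ?thesis by (simp add: ones_def)
qed

lemma prob_hard_probs_typical: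
  assumes "\<And>j. 1 \<le> j \<Longrightarrow> j \<le> 2*m \<Longrightarrow> x j \<longleftrightarrow> j \<le> m"
  shows "prob (hard_probs m \<delta>) (Suc (2*m)) x = (1 - \<delta>) ^ (2*m) / 2"
proof -
  have "(\<Prod>i<2*m. if x (Suc i) then hard_probs m \<delta> (Suc i) else 1 - hard_probs m \<delta> (Suc i))
      = (\<Prod>i<2*m. 1 - \<delta>)"
    using assms by (intro prod.cong) (auto simp: hard_probs_def)
  then show ?thesis
    unfolding prob_def prod.lessThan_Suc_shift by (simp add: hard_probs_def)
qed

lemma prob_yes_outcome: "prob (hard_probs m \<delta>) (Suc (2*m)) (yes_outcome m) = (1 - \<delta>) ^ (2*m) / 2"
  by (rule prob_hard_probs_typical) (simp add: yes_outcome_def)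

lemma prob_no_outcome: "prob (hard_probs m \<delta>) (Suc (2*m)) (no_outcome m) = (1 - \<delta>) ^ (2*m) / 2"
  by (rule prob_hard_probs_typical) (simp add: no_outcome_def)

lemma yes_outcome_needs:
  assumes "determined [0, Suc m] (Suc (2*m)) (restrict_hist (yes_outcome m) C)"
  shows "{0..<Suc m} \<subseteq> C"
proof
  fix j assume j: "j \<in> {0..<Suc m}"
  then have "ones (Suc (2*m)) ((yes_outcome m)(j := False)) = m"
    by (simp add: ones_fun_upd ones_yes_outcome yes_outcome_def)
  then show "j \<in> C"
    using j by (intro tested_if_flip_changes_score[OF assms yes_outcome_in_outcomes, of j False])
      (auto simp: score_two_thresholds ones_yes_outcome)
qed

lemma no_outcome_needs:
  assumes "determined [0, Suc m] (Suc (2*m)) (restrict_hist (no_outcome m) C)"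
  shows "insert 0 {Suc m..<Suc (2*m)} \<subseteq> C"
proof
  fix j assume j: "j \<in> insert 0 {Suc m..<Suc (2*m)}"
  then have "ones (Suc (2*m)) ((no_outcome m)(j := True)) = Suc m"
    by (auto simp: ones_fun_upd ones_no_outcome no_outcome_def)
  then show "j \<in> C"
    using j by (intro tested_if_flip_changes_score[OF assms no_outcome_in_outcomes, of j True])
      (auto simp: score_two_thresholds ones_no_outcome)
qed

lemma set_take_yes_order: "i \<le> Suc (2*m) \<Longrightarrow> set (take i (yes_order m)) = {0..<i}"
  unfolding yes_order_def by (simp add: take_upt del: upt_Suc)

lemma set_take_no_order: "set (take (Suc m) (no_order m)) = insert 0 {Suc m..<Suc (2*m)}"
  by (auto simp: no_order_def)

lemma yes_outcome_determined:
  "determined [0, Suc m] (Suc (2*m)) (restrict_hist (yes_outcome m) (set (take (Suc m) (yes_order m))))"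
proof -
  have "{j \<in> {0..<Suc m}. yes_outcome m j} = {0..<Suc m}" by (auto simp: yes_outcome_def)
  then show ?thesis
    by (simp add: set_take_yes_order) (intro determined_two_thresholds; simp)
qed

lemma no_outcome_determined:
  "determined [0, Suc m] (Suc (2*m)) (restrict_hist (no_outcome m) (set (take (Suc m) (no_order m))))"
proof -
  have "{j \<in> insert 0 {Suc m..<Suc (2*m)}. no_outcome m j} = {}" by (auto simp: no_outcome_def)
  moreover have "{0..<Suc (2*m)} - insert 0 {Suc m..<Suc (2*m)} = {1..<Suc m}" by auto
  ultimately show ?thesis
    unfolding set_take_no_order by (intro determined_two_thresholds) auto
qed

lemma hd_filter_notin_set_take:
  "distinct \<pi> \<Longrightarrow> i < length \<pi> \<Longrightarrow> hd (filter (\<lambda>j. j \<notin> set (take i \<pi>)) \<pi>) = \<pi> ! i"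
proof -
  assume "distinct \<pi>" "i < length \<pi>"
  then have "filter (\<lambda>j. j \<notin> set (take i \<pi>)) (take i \<pi> @ drop i \<pi>) = drop i \<pi>"
    using set_take_disj_set_drop_if_distinct[of \<pi> i i]
    by (simp only: filter_append) (auto simp: filter_id_conv)
  then show ?thesis using \<open>i < length \<pi>\<close> by (simp add: hd_drop_conv_nth)
qed

lemma yes_order_props:
  "distinct (yes_order m)" "length (yes_order m) = Suc (2*m)" "yes_order m ! 0 = 0"
  by (simp_all add: yes_order_def del: upt_Suc)

lemma no_order_props:
  "distinct (no_order m)" "length (no_order m) = Suc (2*m)" "no_order m ! 0 = 0"
  by (auto simp: no_order_def)

text \<open>Both orders start with test 0, whose outcome then selects the order that is followed.\<close>

lemma branching_strategy_yes:
  "\<forall>i<Suc m. branching_strategy m (restrict_hist (yes_outcome m) (set (take i (yes_order m)))) = yes_order m ! i"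
proof (intro allI impI)
  fix i assume i: "i < Suc m"
  show "branching_strategy m (restrict_hist (yes_outcome m) (set (take i (yes_order m)))) = yes_order m ! i"
  proof (cases "i = 0")
    case True
    then show ?thesis
      using hd_filter_notin_set_take[of "no_order m" 0] yes_order_props no_order_props
      by (simp add: branching_strategy_def)
  next
    case False
    then have "0 \<in> set (take i (yes_order m))"
      using i by (simp add: set_take_yes_order)
    then have "restrict_hist (yes_outcome m) (set (take i (yes_order m))) 0 = Some True"
      by (simp add: restrict_hist_def yes_outcome_def)
    then show ?thesis
      using i yes_order_props by (simp add: branching_strategy_def hd_filter_notin_set_take)
  qed
qed

lemma branching_strategy_no:
  "\<forall>i<Suc m. branching_strategy m (restrict_hist (no_outcome m) (set (take i (no_order m)))) = no_order m ! i"
proof (intro allI impI)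
  fix i assume "i < Suc m"
  moreover have "restrict_hist (no_outcome m) (set (take i (no_order m))) 0 \<noteq> Some True"
    by (simp add: restrict_hist_def no_outcome_def)
  ultimately show "branching_strategy m (restrict_hist (no_outcome m) (set (take i (no_order m)))) = no_order m ! i"
    using no_order_props by (simp add: branching_strategy_def hd_filter_notin_set_take)
qed

lemma valid_branching_strategy: "valid_adaptive t (Suc (2*m)) (branching_strategy m)"
  unfolding valid_adaptive_def
proof (intro allI impI)
  fix h assume h: "dom h \<subseteq> {0..<Suc (2*m)} \<and> \<not> determined t (Suc (2*m)) h"
  let ?l = "if h 0 = Some True then yes_order m else no_order m"
  have l: "set ?l = {0..<Suc (2*m)}" by (auto simp: yes_order_def no_order_def)
  have "filter (\<lambda>j. j \<notin> dom h) ?l \<noteq> []"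
  proof
    assume "filter (\<lambda>j. j \<notin> dom h) ?l = []"
    then have "{0..<Suc (2*m)} \<subseteq> dom h" using l by (auto simp: filter_empty_conv)
    then show False using h determined_if_all_tested by blast
  qed
  then have "branching_strategy m h \<in> set (filter (\<lambda>j. j \<notin> dom h) ?l)"
    unfolding branching_strategy_def by (rule hd_in_set)
  then show "branching_strategy m h < Suc (2*m) \<and> branching_strategy m h \<notin> dom h" using l by auto
qed

lemma adaptive_cost_branching_strategy:
  assumes "x \<in> {yes_outcome m, no_outcome m}"
  shows "adaptive_cost (\<lambda>_. 1) [0, Suc m] (Suc (2*m)) (branching_strategy m) x \<le> Suc m"
proof -
  have "adaptive_cost (\<lambda>_. 1) [0, Suc m] (Suc (2*m)) (branching_strategy m) (yes_outcome m) \<le> Suc m"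
    by (rule adaptive_cost_unit_le_prefix[OF branching_strategy_yes yes_outcome_determined])
      (simp add: yes_order_props)
  moreover have "adaptive_cost (\<lambda>_. 1) [0, Suc m] (Suc (2*m)) (branching_strategy m) (no_outcome m) \<le> Suc m"
    by (rule adaptive_cost_unit_le_prefix[OF branching_strategy_no no_outcome_determined])
      (simp add: no_order_props)
  ultimately show ?thesis using assms by auto
qed

lemma OPT_hard_probs_le:
  assumes "0 \<le> \<delta>" "\<delta> \<le> 1"
  shows "OPT (\<lambda>_. 1) (hard_probs m \<delta>) [0, Suc m] (Suc (2*m)) \<le> (real m + 1) + real m * (1 - (1 - \<delta>) ^ (2*m))"
proof -
  let ?p = "hard_probs m \<delta>" and ?S = "{yes_outcome m, no_outcome m}"
  have p: "0 \<le> ?p j \<and> ?p j \<le> 1" for j using assms by (simp add: hard_probs_def)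
  have q: "(\<Sum>x\<in>?S. prob ?p (Suc (2*m)) x) = (1 - \<delta>) ^ (2*m)"
    using yes_outcome_ne_no_outcome by (simp add: prob_yes_outcome prob_no_outcome)
  have "OPT (\<lambda>_. 1) ?p [0, Suc m] (Suc (2*m))
      \<le> expected_adaptive (\<lambda>_. 1) ?p [0, Suc m] (Suc (2*m)) (branching_strategy m)"
    using p by (intro OPT_le_expected_adaptive valid_branching_strategy) auto
  also have "\<dots> \<le> Suc m * (\<Sum>x\<in>?S. prob ?p (Suc (2*m)) x) + Suc (2*m) * (1 - (\<Sum>x\<in>?S. prob ?p (Suc (2*m)) x))"
    using yes_outcome_in_outcomes no_outcome_in_outcomes p adaptive_cost_branching_strategy
    by (intro expected_adaptive_unit_le valid_branching_strategy) auto
  also have "\<dots> = (real m + 1) + real m * (1 - (1 - \<delta>) ^ (2*m))"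
    unfolding q by (simp add: algebra_simps)
  finally show ?thesis .
qed

lemma OPT_na_hard_probs_ge:
  assumes "0 \<le> \<delta>" "\<delta> \<le> 1"
  shows "(1 - \<delta>) ^ (2*m) * (3 * real m + 2) / 2 \<le> OPT_na (\<lambda>_. 1) (hard_probs m \<delta>) [0, Suc m] (Suc (2*m))"
proof (rule le_OPT_na)
  fix \<pi> assume \<pi>: "valid_nonadaptive (Suc (2*m)) \<pi>"
  let ?p = "hard_probs m \<delta>" and ?t = "[0, Suc m]" and ?n = "Suc (2*m)"
  let ?a = "na_cost (\<lambda>_. 1) ?t ?n \<pi> (yes_outcome m)" and ?b = "na_cost (\<lambda>_. 1) ?t ?n \<pi> (no_outcome m)"
  have p: "0 \<le> ?p j \<and> ?p j \<le> 1" for j using assms by (simp add: hard_probs_def)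
  have A: "{0..<Suc m} \<subseteq> set (take (na_stop ?t ?n \<pi> (yes_outcome m)) \<pi>)"
    by (rule yes_outcome_needs[OF na_stop_determined[OF \<pi>]])
  have B: "insert 0 {Suc m..<?n} \<subseteq> set (take (na_stop ?t ?n \<pi> (no_outcome m)) \<pi>)"
    by (rule no_outcome_needs[OF na_stop_determined[OF \<pi>]])
  have "Suc m \<le> ?a" "Suc m \<le> ?b" using card_le_na_cost[OF A] card_le_na_cost[OF B] by simp_all
  moreover have "{0..<Suc m} \<union> insert 0 {Suc m..<?n} = {0..<?n}" by auto
  then have "?n \<le> max ?a ?b" using card_Un_le_max_na_cost[OF A B] by simp
  ultimately have "3 * real m + 2 \<le> ?a + ?b" by linarith
  then have "(1 - \<delta>) ^ (2*m) * (3 * real m + 2) / 2 \<le> (1 - \<delta>) ^ (2*m) / 2 * ?a + (1 - \<delta>) ^ (2*m) / 2 * ?b"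
    using assms by (simp add: distrib_left[symmetric] mult_left_mono)
  also have "\<dots> \<le> expected_nonadaptive (\<lambda>_. 1) ?p ?t ?n \<pi>"
    using expected_nonadaptive_ge_sum[of ?n ?p "\<lambda>_. 1" "{yes_outcome m, no_outcome m}" ?t \<pi>]
      yes_outcome_in_outcomes no_outcome_in_outcomes yes_outcome_ne_no_outcome p
    by (simp add: prob_yes_outcome prob_no_outcome)
  finally show "(1 - \<delta>) ^ (2*m) * (3 * real m + 2) / 2 \<le> expected_nonadaptive (\<lambda>_. 1) ?p ?t ?n \<pi>" .
qed

lemma ratio_gap:
  fixes u :: real
  assumes "0 \<le> u" "(3 * real m + 1) * u \<le> 1 / 2"
  shows "(3 / 2 - 1 / (real m + 1)) * ((real m + 1) + real m * u) \<le> (1 - u) * (3 * real m + 2) / 2"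
proof -
  have "(3 / 2 - 1 / (real m + 1)) * ((real m + 1) + real m * u)
      = (3 * real m + 1) / 2 + 3 / 2 * real m * u - real m * u / (real m + 1)"
    by (simp add: field_simps)
  also have "\<dots> \<le> (3 * real m + 1) / 2 + 3 / 2 * real m * u"
    using assms(1) by simp
  also have "\<dots> \<le> (1 - u) * (3 * real m + 2) / 2"
    using assms(2) by (simp add: field_simps)
  finally show ?thesis .
qed

lemma hard_delta_bounds:
  "0 < 1 / (4 * (real m + 1) * (3 * real m + 1))" "1 / (4 * (real m + 1) * (3 * real m + 1)) < 1"
proof -
  have "1 * 1 \<le> (real m + 1) * (3 * real m + 1)" by (rule mult_mono) auto
  then have "1 < 4 * (real m + 1) * (3 * real m + 1)" unfolding mult.assoc by linarith
  then show "1 / (4 * (real m + 1) * (3 * real m + 1)) < 1" by simp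
qed simp

lemma hard_instance_ratio:
  fixes m :: nat
  defines "\<delta> \<equiv> 1 / (4 * (real m + 1) * (3 * real m + 1))"
  shows "(3 / 2 - 1 / (real m + 1)) * OPT (\<lambda>_. 1) (hard_probs m \<delta>) [0, Suc m] (Suc (2*m))
           \<le> OPT_na (\<lambda>_. 1) (hard_probs m \<delta>) [0, Suc m] (Suc (2*m))"
proof -
  let ?u = "1 - (1 - \<delta>) ^ (2*m)"
  have \<delta>: "0 < \<delta>" "\<delta> < 1" unfolding \<delta>_def by (rule hard_delta_bounds)+
  have "1 + 2 * m * (- \<delta>) \<le> (1 + - \<delta>) ^ (2*m)"
    by (rule Bernoulli_inequality) (use \<delta> in simp)
  then have "(3 * real m + 1) * ?u \<le> (3 * real m + 1) * (2 * real m * \<delta>)" by (intro mult_left_mono) auto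
  also have "\<dots> = real m / (2 * (real m + 1))" unfolding \<delta>_def by (simp add: divide_simps)
  also have "\<dots> \<le> 1 / 2" by simp
  finally have u: "(3 * real m + 1) * ?u \<le> 1 / 2" .
  have "0 \<le> ?u" using \<delta> by (simp add: power_le_one)
  have "(3 / 2 - 1 / (real m + 1)) * OPT (\<lambda>_. 1) (hard_probs m \<delta>) [0, Suc m] (Suc (2*m))
        \<le> (3 / 2 - 1 / (real m + 1)) * ((real m + 1) + real m * ?u)"
    using OPT_hard_probs_le[of \<delta> m] \<delta> by (intro mult_left_mono) (auto simp: field_simps)
  also have "\<dots> \<le> (1 - ?u) * (3 * real m + 2) / 2" by (rule ratio_gap[OF \<open>0 \<le> ?u\<close> u])
  also have "\<dots> \<le> OPT_na (\<lambda>_. 1) (hard_probs m \<delta>) [0, Suc m] (Suc (2*m))"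
    using OPT_na_hard_probs_ge[of \<delta> m] \<delta> by simp
  finally show ?thesis .
qed

theorem theorem3:
  fixes \<epsilon> :: real
  assumes "\<epsilon> > 0"
  shows "\<exists>(n::nat) (k::nat) (p::nat \<Rightarrow> real).
           valid_thresholds [0, k] n \<and> 0 < k \<and> k \<le> n \<and>
           (\<forall>j<n. 0 < p j \<and> p j < 1) \<and>
           OPT_na (\<lambda>_. 1) p [0, k] n \<ge> (3/2 - \<epsilon>) * OPT (\<lambda>_. 1) p [0, k] n"
proof -
  obtain m :: nat where m: "1 / (real m + 1) < \<epsilon>"
    using reals_Archimedean[OF assms] by (auto simp: inverse_eq_divide add.commute)
  define \<delta> where "\<delta> = 1 / (4 * (real m + 1) * (3 * real m + 1))"
  let ?p = "hard_probs m \<delta>"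
  have \<delta>: "0 < \<delta>" "\<delta> < 1" unfolding \<delta>_def by (rule hard_delta_bounds)+
  then have p: "\<forall>j. 0 < ?p j \<and> ?p j < 1" by (simp add: hard_probs_def)
  have "0 \<le> OPT (\<lambda>_. 1) ?p [0, Suc m] (Suc (2*m))"
    using p by (intro OPT_nonneg[OF valid_branching_strategy]) (auto simp: less_imp_le)
  then have "(3/2 - \<epsilon>) * OPT (\<lambda>_. 1) ?p [0, Suc m] (Suc (2*m))
             \<le> (3 / 2 - 1 / (real m + 1)) * OPT (\<lambda>_. 1) ?p [0, Suc m] (Suc (2*m))"
    using m by (intro mult_right_mono) auto
  also have "\<dots> \<le> OPT_na (\<lambda>_. 1) ?p [0, Suc m] (Suc (2*m))"
    unfolding \<delta>_def by (rule hard_instance_ratio)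
  finally show ?thesis
    using p by (intro exI[of _ "Suc (2*m)"] exI[of _ "Suc m"] exI[of _ ?p]) (simp add: valid_thresholds_def)
qed

end
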